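(* For every integer $n\ge 0$, \[ \left(\frac23\right)^n p_n\!\left(\frac14\right) = \sum_{k=0}^n B_{n-k}^{(-k)}. \]
   Context: Define polynomial sequences $(p_k(x))_{k\ge -1}$ and $(q_k(x))_{k\ge -1}$ by $p_{-1}(x)=0$, $q_{-1}(x)=1$ and, for $k\ge -1$, $p_{k+1}(x) = 2(kx+1)p_k(x) + 2x(1-x)p_k'(x) + q_k(x)$, $q_{k+1}(x) = (2(k+1)x+1)q_k(x) + 2x(1-x)q_k'(x)$. For an integer $k$, $\mathrm{Li}_k(z)=\sum_{m\ge1} z^m/m^k$. The poly-Bernoulli numbers $B_n^{(k)}\in\mathbb{Q}$ are defined by $\sum_{n\ge0} B_n^{(k)} \frac{t^n}{n!} = \frac{\mathrm{Li}_k(1-e^{-t})}{1-e^{-t}}$. *)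

theory Defs
  imports "HOL-Computational_Algebra.Computational_Algebra"
begin

text \<open>The pair (p_{m-1}, q_{m-1}) is stored at index m, so index 0 holds (p_{-1}, q_{-1}) = (0, 1).
  The step from index m to m+1 uses k = m - 1 (an integer, k \<ge> -1).\<close>
fun pq_seq :: "nat \<Rightarrow> rat poly \<times> rat poly" where
  "pq_seq 0 = (0, 1)"
| "pq_seq (Suc m) =
     (let k = (of_int (int m - 1) :: rat); p = fst (pq_seq m); q = snd (pq_seq m) in
      (smult 2 ([:1, k:] * p) + [:0, 2, -2:] * pderiv p + q,
       [:1, 2 * (k + 1):] * q + [:0, 2, -2:] * pderiv q))"

definition p_poly :: "int \<Rightarrow> rat poly" where
  "p_poly k = fst (pq_seq (nat (k + 1)))"

definition q_poly :: "int \<Rightarrow> rat poly" where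
  "q_poly k = snd (pq_seq (nat (k + 1)))"

definition Li_fps :: "int \<Rightarrow> rat fps" where
  "Li_fps k = Abs_fps (\<lambda>m. if m = 0 then 0 else 1 / ((of_nat m :: rat) powi k))"

definition polyB_gf :: "int \<Rightarrow> rat fps" where
  "polyB_gf k = fps_compose (Li_fps k) (1 - fps_exp (-1)) / (1 - fps_exp (-1))"

definition polyB :: "nat \<Rightarrow> int \<Rightarrow> rat" where
  "polyB n k = fact n * fps_nth (polyB_gf k) n"

end

theory Submission
  imports Defs
begin

text \<open>
  Both sides are coefficients of exponential generating functions (EGFs) solving
  (4 - e^t) M' = 3 e^t + 2 M with M(0) = 0, and this initial value problem has only one solution.

  The operators producing p_k and q_k obey a Leibniz rule, which makes p_n a
  binomial convolution of the q_k. A second recurrence for the q_k, evaluated at x = 1/4, says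
  that the EGF K of (2/3)^k q_(k-1)(1/4) solves (4 - e^t) K' = 2 K. Hence
  (4 - e^t) K^2 = 3 e^t, and the EGF of the left side, (\<integral>K) K, solves the ODE.

  The double EGF F of the B_n^(-k) is e^(x+y) / (e^x + e^y - e^(x+y)), so F
  satisfies a first-order linear PDE. Summing the PDE along antidiagonals turns the x- and
  y-derivatives into boundary terms and leaves the ODE for the EGF of the antidiagonal sums.
\<close>

section \<open>The polynomials p and q\<close>

lemma sum_choose_Suc_convolution:
  fixes f g :: "nat \<Rightarrow> 'a::comm_semiring_1"
  shows "(\<Sum>j\<le>Suc n. of_nat (Suc n choose j) * (f j * g (Suc n - j))) =
    (\<Sum>j\<le>n. of_nat (n choose j) * (f (Suc j) * g (n - j) + f j * g (Suc n - j)))"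
proof -
  have "(\<Sum>j\<le>Suc n. of_nat (Suc n choose j) * (f j * g (Suc n - j))) =
      (\<Sum>j\<le>n. of_nat (n choose j) * (f (Suc j) * g (n - j)))
        + (f 0 * g (Suc n) + (\<Sum>j\<le>n. of_nat (n choose Suc j) * (f (Suc j) * g (n - j))))"
    by (subst sum.atMost_Suc_shift) (simp add: sum.distrib algebra_simps)
  also have "f 0 * g (Suc n) + (\<Sum>j\<le>n. of_nat (n choose Suc j) * (f (Suc j) * g (n - j))) =
      (\<Sum>j\<le>Suc n. of_nat (n choose j) * (f j * g (Suc n - j)))"
    by (subst sum.atMost_Suc_shift) simp
  also have "\<dots> = (\<Sum>j\<le>n. of_nat (n choose j) * (f j * g (Suc n - j)))"
    by (simp add: binomial_eq_0)
  finally show ?thesis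
    by (simp add: sum.distrib distrib_left)
qed

lemma sum_choose_Suc_Suc_convolution:
  fixes f g :: "nat \<Rightarrow> 'a::comm_semiring_1"
  shows "(\<Sum>i\<le>Suc n. of_nat (Suc (Suc n) choose Suc i) * (f i * g (Suc n - i))) =
    f 0 * g (Suc n) +
    (\<Sum>i\<le>n. of_nat (Suc n choose Suc i) * (f (Suc i) * g (n - i) + f i * g (Suc n - i)))"
proof -
  have "(\<Sum>i\<le>Suc n. of_nat (Suc (Suc n) choose Suc i) * (f i * g (Suc n - i))) =
      (\<Sum>i\<le>Suc n. of_nat (Suc n choose i) * (f i * g (Suc n - i))) +
      (\<Sum>i\<le>Suc n. of_nat (Suc n choose Suc i) * (f i * g (Suc n - i)))"
    by (simp add: sum.distrib algebra_simps)
  also have "(\<Sum>i\<le>Suc n. of_nat (Suc n choose i) * (f i * g (Suc n - i))) =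
      f 0 * g (Suc n) + (\<Sum>i\<le>n. of_nat (Suc n choose Suc i) * (f (Suc i) * g (n - i)))"
    by (subst sum.atMost_Suc_shift) simp
  also have "(\<Sum>i\<le>Suc n. of_nat (Suc n choose Suc i) * (f i * g (Suc n - i))) =
      (\<Sum>i\<le>n. of_nat (Suc n choose Suc i) * (f i * g (Suc n - i)))"
    by (simp add: binomial_eq_0)
  finally show ?thesis
    by (simp add: sum.distrib distrib_left add.assoc)
qed

definition q_step :: "'a::idom \<Rightarrow> 'a poly \<Rightarrow> 'a poly" where
  "q_step c f = [:1, 2 * c:] * f + [:0, 2, -2:] * pderiv f"

lemma q_step_add: "q_step c (f + g) = q_step c f + q_step c g"
  by (simp only: q_step_def pderiv_add distrib_left add_ac)

lemma q_step_0: "q_step c 0 = 0"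
  by (simp add: q_step_def)

lemma q_step_sum: "q_step c (\<Sum>i\<in>S. f i) = (\<Sum>i\<in>S. q_step c (f i))"
  by (induction S rule: infinite_finite_induct) (simp_all add: q_step_0 q_step_add)

lemma q_step_of_nat_mult: "q_step c (of_nat k * f) = of_nat k * q_step c f"
  by (simp only: q_step_def pderiv_mult pderiv_of_nat distrib_left mult_zero_left add_0 mult_ac)

lemma q_step_mult: "q_step (c + d) (f * g) + f * g = q_step c f * g + f * q_step d g"
proof -
  have "[:1, 2 * (c + d):] + 1 = [:1, 2 * c:] + [:1, 2 * d:]"
    by (simp add: one_pCons algebra_simps)
  then show ?thesis
    unfolding q_step_def pderiv_mult by algebra
qed

definition p_seq :: "nat \<Rightarrow> rat poly" where
  "p_seq m = fst (pq_seq m)"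

definition q_seq :: "nat \<Rightarrow> rat poly" where
  "q_seq m = snd (pq_seq m)"

lemma p_seq_0 [simp]: "p_seq 0 = 0"
  by (simp add: p_seq_def)

lemma q_seq_0 [simp]: "q_seq 0 = 1"
  by (simp add: q_seq_def)

lemma q_seq_Suc: "q_seq (Suc m) = q_step (of_nat m) (q_seq m)"
  by (simp add: q_seq_def q_step_def Let_def)

lemma p_seq_Suc: "p_seq (Suc m) = q_step (of_int (int m - 1)) (p_seq m) + p_seq m + q_seq m"
proof -
  have "smult 2 ([:1, c:] * f) = [:1, 2 * c:] * f + f" for c :: rat and f
  proof -
    have "smult 2 [:1, c:] = [:1, 2 * c:] + 1"
      by (simp add: one_pCons)
    then show ?thesis
      by (metis mult_smult_left distrib_right mult_1)
  qed
  then show ?thesis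
    by (simp add: p_seq_def q_seq_def q_step_def Let_def)
qed

lemma p_seq_Suc_eq_sum:
  "p_seq (Suc n) = (\<Sum>i\<le>n. of_nat (Suc n choose Suc i) * (q_seq i * q_seq (n - i)))"
proof (induction n)
  case 0
  then show ?case
    by (simp add: p_seq_Suc q_step_def)
next
  case (Suc n)
  have step: "q_step (of_nat n) (q_seq i * q_seq (n - i)) + q_seq i * q_seq (n - i) =
      q_seq (Suc i) * q_seq (n - i) + q_seq i * q_seq (Suc n - i)" if "i \<le> n" for i
    using q_step_mult [of "of_nat i" "of_nat (n - i)" "q_seq i" "q_seq (n - i)"] that
    by (simp add: q_seq_Suc Suc_diff_le)
  have "p_seq (Suc (Suc n)) = q_step (of_nat n) (p_seq (Suc n)) + p_seq (Suc n) + q_seq (Suc n)"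
    by (simp add: p_seq_Suc)
  also have "q_step (of_nat n) (p_seq (Suc n)) + p_seq (Suc n) =
      (\<Sum>i\<le>n. of_nat (Suc n choose Suc i) *
         (q_seq (Suc i) * q_seq (n - i) + q_seq i * q_seq (Suc n - i)))"
    unfolding Suc.IH q_step_sum q_step_of_nat_mult sum.distrib [symmetric] distrib_left [symmetric]
    by (intro sum.cong refl) (simp add: step)
  finally show ?case
    unfolding sum_choose_Suc_Suc_convolution by (simp only: q_seq_0 mult_1 add.commute)
qed

text \<open>
  The expansion of q_(k+1) below is the coefficientwise form of the ODE
  (1 - x e^((2-2x)t)) Q' = (1 - x) Q for the EGF Q(t) = sum_k q_(k-1)(x) t^k / k!;
  here w_poly m = x (2 - 2x)^m.
\<close>

definition w_poly :: "nat \<Rightarrow> rat poly" where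
  "w_poly m = [:0, 1:] * [:2, -2:] ^ m"

lemma w_poly_Suc: "w_poly (Suc m) = [:2, -2:] * w_poly m"
  by (simp add: w_poly_def mult.left_commute)

lemma q_step_w_poly: "q_step (of_nat m) (w_poly m) = [:3, -2:] * w_poly m"
proof (induction m)
  case 0
  then show ?case
    by (simp add: w_poly_def q_step_def pderiv_pCons)
next
  case (Suc m)
  have "q_step 1 [:2, -2:] = ([:2, -2:] :: rat poly)"
    by (simp add: q_step_def pderiv_pCons)
  then have "q_step (1 + of_nat m) ([:2, -2:] * w_poly m) + [:2, -2:] * w_poly m =
      [:2, -2:] * w_poly m + [:2, -2:] * ([:3, -2:] * w_poly m)"
    by (simp only: q_step_mult Suc.IH)
  then have "q_step (1 + of_nat m) ([:2, -2:] * w_poly m) = [:2, -2:] * ([:3, -2:] * w_poly m)"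
    by (metis add.commute add_left_cancel)
  then show ?case
    by (simp only: w_poly_Suc of_nat_Suc add.commute mult.left_commute)
qed

lemma q_seq_Suc_expansion:
  "q_seq (Suc i) =
     [:1, -1:] * q_seq i + (\<Sum>j\<le>i. of_nat (i choose j) * (q_seq (Suc j) * w_poly (i - j)))"
proof (induction i)
  case 0
  then show ?case
    by (simp add: q_seq_Suc q_step_def w_poly_def one_pCons)
next
  case (Suc i)
  have "q_step 1 [:1, -1:] = ([:1, -1:] :: rat poly)"
    by (simp add: q_step_def pderiv_pCons)
  then have first: "q_step (of_nat (Suc i)) ([:1, -1:] * q_seq i) = [:1, -1:] * q_seq (Suc i)"
    using q_step_mult [of 1 "of_nat i" "[:1, -1:]" "q_seq i"] by (simp add: q_seq_Suc)
  have summand: "q_step (of_nat (Suc i)) (q_seq (Suc j) * w_poly (i - j)) =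
      q_seq (Suc (Suc j)) * w_poly (i - j) + q_seq (Suc j) * w_poly (Suc i - j)"
    if "j \<le> i" for j
  proof -
    have "of_nat (Suc i) = (of_nat (Suc j) + of_nat (i - j) :: rat)"
      using that by simp
    then have "q_step (of_nat (Suc i)) (q_seq (Suc j) * w_poly (i - j)) +
        q_seq (Suc j) * w_poly (i - j) =
        q_seq (Suc (Suc j)) * w_poly (i - j) + q_seq (Suc j) * ([:3, -2:] * w_poly (i - j))"
      by (simp only: q_step_mult q_step_w_poly q_seq_Suc [of "Suc j"])
    moreover have "[:3, -2:] * w_poly (i - j) = w_poly (Suc i - j) + w_poly (i - j)"
    proof -
      have "[:3, -2:] = [:2, -2:] + (1 :: rat poly)"
        by (simp add: one_pCons)
      then show ?thesis
        using that by (simp only: Suc_diff_le w_poly_Suc distrib_right mult_1)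
    qed
    ultimately show ?thesis
      by algebra
  qed
  have "q_seq (Suc (Suc i)) = q_step (of_nat (Suc i)) (q_seq (Suc i))"
    by (simp add: q_seq_Suc)
  also have "\<dots> = [:1, -1:] * q_seq (Suc i) + (\<Sum>j\<le>i. of_nat (i choose j) *
      (q_seq (Suc (Suc j)) * w_poly (i - j) + q_seq (Suc j) * w_poly (Suc i - j)))"
    unfolding Suc.IH q_step_add q_step_sum q_step_of_nat_mult first
    by (simp add: summand del: of_nat_Suc)
  also have "\<dots> = [:1, -1:] * q_seq (Suc i) +
      (\<Sum>j\<le>Suc i. of_nat (Suc i choose j) * (q_seq (Suc j) * w_poly (Suc i - j)))"
    by (simp only: sum_choose_Suc_convolution [where f = "\<lambda>j. q_seq (Suc j)" and g = w_poly])
  finally show ?case .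
qed

section \<open>Exponential generating functions\<close>

definition egf :: "(nat \<Rightarrow> 'a::field_char_0) \<Rightarrow> 'a fps" where
  "egf a = Abs_fps (\<lambda>n. a n / fact n)"

lemma egf_nth [simp]: "egf a $ n = a n / fact n"
  by (simp add: egf_def)

lemma fps_exp_eq_egf: "fps_exp c = egf (\<lambda>n. c ^ n)"
  by (simp add: fps_eq_iff)

lemma fps_deriv_egf: "fps_deriv (egf a) = egf (\<lambda>n. a (Suc n))"
  by (simp add: fps_eq_iff field_simps del: of_nat_Suc)

lemma fps_integral_egf:
  "fps_integral (egf a) 0 = egf (\<lambda>n. case n of 0 \<Rightarrow> 0 | Suc m \<Rightarrow> a m)"
  by (simp add: fps_eq_iff fps_integral_def split: nat.split)
     (simp add: field_simps del: of_nat_Suc)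

lemma egf_mult:
  "egf a * egf b = egf (\<lambda>n. \<Sum>k\<le>n. of_nat (n choose k) * a k * b (n - k))"
proof (rule fps_ext)
  fix n
  have "(egf a * egf b) $ n = (\<Sum>k\<le>n. a k / fact k * (b (n - k) / fact (n - k)))"
    by (simp add: fps_mult_nth atLeast0AtMost)
  also have "\<dots> = (\<Sum>k\<le>n. of_nat (n choose k) * a k * b (n - k)) / fact n"
    unfolding sum_divide_distrib
    by (intro sum.cong refl) (simp add: binomial_fact field_simps)
  finally show "(egf a * egf b) $ n = egf (\<lambda>n. \<Sum>k\<le>n. of_nat (n choose k) * a k * b (n - k)) $ n"
    by simp
qed

lemma fps_eq_0_by_causal_deriv:
  fixes f :: "'a::{comm_semiring_1,semiring_no_zero_divisors,semiring_char_0} fps"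
  assumes "f $ 0 = 0"
    and "\<And>n. (\<And>m. m \<le> n \<Longrightarrow> f $ m = 0) \<Longrightarrow> fps_deriv f $ n = 0"
  shows "f = 0"
proof -
  have "\<forall>m\<le>n. f $ m = 0" for n
  proof (induction n)
    case 0
    then show ?case
      using assms(1) by simp
  next
    case (Suc n)
    then have "of_nat (Suc n) * f $ Suc n = 0"
      using assms(2) [of n] by simp
    then have "f $ Suc n = 0"
      by (metis mult_eq_0_iff of_nat_eq_0_iff nat.distinct(1))
    then show ?case
      using Suc.IH le_Suc_eq by auto
  qed
  then show ?thesis
    by (intro fps_ext) auto
qed

lemma fps_linear_ODE_eq_0:
  fixes f :: "'a::field_char_0 fps"
  assumes "a * fps_deriv f = b * f" and "a $ 0 \<noteq> 0" and "f $ 0 = 0"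
  shows "f = 0"
proof (rule fps_eq_0_by_causal_deriv)
  show "f $ 0 = 0"
    by fact
  fix n
  assume f_zero: "\<And>m. m \<le> n \<Longrightarrow> f $ m = 0"
  have "fps_deriv f = inverse a * b * f"
    using assms(1,2) by (metis inverse_mult_eq_1 mult.assoc mult_1)
  also have "(inverse a * b * f) $ n = 0"
    by (simp add: fps_mult_nth f_zero)
  finally show "fps_deriv f $ n = 0" .
qed

section \<open>The left-hand side\<close>

definition alpha :: "nat \<Rightarrow> rat" where
  "alpha n = (2/3) ^ n * poly (q_seq n) (1/4)"

lemma alpha_0: "alpha 0 = 1"
  by (simp add: alpha_def)

lemma alpha_recurrence:
  "4 * alpha (Suc n) = 2 * alpha n + (\<Sum>j\<le>n. of_nat (n choose j) * alpha (Suc j))"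
proof -
  have scale: "(2/3) ^ n * (3/2) ^ (n - j) = ((2/3) ^ j :: rat)" if "j \<le> n" for j
  proof -
    have "(2/3 :: rat) ^ n = (2/3) ^ j * (2/3) ^ (n - j)"
      using that by (simp flip: power_add)
    then show ?thesis
      by (simp flip: power_mult_distrib)
  qed
  have "4 * alpha (Suc n) = 4 * (2/3) ^ Suc n * poly (q_seq (Suc n)) (1/4)"
    by (simp add: alpha_def)
  also have "\<dots> = 4 * (2/3) ^ Suc n * (3/4 * poly (q_seq n) (1/4)) +
      (\<Sum>j\<le>n. of_nat (n choose j) *
        (poly (q_seq (Suc j)) (1/4) * (4 * (2/3) ^ Suc n * (1/4 * (3/2) ^ (n - j)))))"
    by (subst q_seq_Suc_expansion)
       (simp add: poly_sum w_poly_def sum_distrib_left distrib_left mult_ac)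
  also have "\<dots> = 2 * alpha n + (\<Sum>j\<le>n. of_nat (n choose j) * alpha (Suc j))"
    unfolding alpha_def
    by (intro arg_cong2 [where f = "(+)"] sum.cong refl) (simp_all add: scale mult_ac)
  finally show ?thesis .
qed

abbreviation alpha_egf :: "rat fps" where
  "alpha_egf \<equiv> egf alpha"

lemma alpha_egf_ODE: "(4 - fps_exp 1) * fps_deriv alpha_egf = 2 * alpha_egf"
proof (rule fps_ext)
  fix n
  have "fps_deriv alpha_egf * fps_exp 1 = egf (\<lambda>n. \<Sum>j\<le>n. of_nat (n choose j) * alpha (Suc j))"
    by (simp add: fps_exp_eq_egf fps_deriv_egf egf_mult)
  then have "((4 - fps_exp 1) * fps_deriv alpha_egf) $ n =
      (4 * alpha (Suc n) - (\<Sum>j\<le>n. of_nat (n choose j) * alpha (Suc j))) / fact n"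
    by (simp add: algebra_simps fps_deriv_egf diff_divide_distrib numeral_fps_const)
  also have "\<dots> = (2 * alpha_egf) $ n"
    by (simp add: alpha_recurrence numeral_fps_const)
  finally show "((4 - fps_exp 1) * fps_deriv alpha_egf) $ n = (2 * alpha_egf) $ n" .
qed

lemma alpha_egf_square: "(4 - fps_exp 1) * alpha_egf ^ 2 = 3 * fps_exp 1"
proof -
  define Z where "Z = (4 - fps_exp 1) * alpha_egf ^ 2"
  have "fps_deriv Z = - fps_exp 1 * alpha_egf ^ 2 + 2 * alpha_egf * ((4 - fps_exp 1) * fps_deriv alpha_egf)"
    by (simp add: Z_def power2_eq_square algebra_simps)
  also have "\<dots> = - fps_exp 1 * alpha_egf ^ 2 + 2 * alpha_egf * (2 * alpha_egf)"
    by (simp only: alpha_egf_ODE)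
  also have "\<dots> = fps_const 1 * Z"
    by (simp add: Z_def power2_eq_square algebra_simps)
  finally have "Z = fps_const (Z $ 0) * fps_exp 1"
    by (simp only: fps_exp_unique_ODE)
  moreover have "Z $ 0 = 3"
    by (simp add: Z_def power2_eq_square alpha_0 numeral_fps_const)
  ultimately show ?thesis
    by (simp add: Z_def numeral_fps_const)
qed

lemma scaled_p_poly_quarter_eq_convolution:
  "(2/3) ^ n * poly (p_poly (int n)) (1/4) =
     (\<Sum>i\<le>n. of_nat (Suc n choose Suc i) * (alpha i * alpha (n - i)))"
proof -
  have "nat (int n + 1) = Suc n"
    by simp
  then have "p_poly (int n) = p_seq (Suc n)"
    by (simp only: p_poly_def p_seq_def)
  then have "(2/3) ^ n * poly (p_poly (int n)) (1/4) = (\<Sum>i\<le>n. of_nat (Suc n choose Suc i) *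
      ((2/3) ^ n * (poly (q_seq i) (1/4) * poly (q_seq (n - i)) (1/4))))"
    by (simp add: p_seq_Suc_eq_sum poly_sum sum_distrib_left mult_ac)
  also have "\<dots> = (\<Sum>i\<le>n. of_nat (Suc n choose Suc i) * (alpha i * alpha (n - i)))"
  proof (intro sum.cong refl)
    fix i
    assume "i \<in> {..n}"
    then have "(2/3 :: rat) ^ n = (2/3) ^ i * (2/3) ^ (n - i)"
      by (simp flip: power_add)
    then show "of_nat (Suc n choose Suc i) * ((2/3) ^ n * (poly (q_seq i) (1/4) * poly (q_seq (n - i)) (1/4))) =
        of_nat (Suc n choose Suc i) * (alpha i * alpha (n - i))"
      by (simp add: alpha_def mult_ac)
  qed
  finally show ?thesis .
qed

definition p_egf :: "rat fps" where
  "p_egf = fps_integral alpha_egf 0 * alpha_egf"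

lemma p_egf_nth_0: "p_egf $ 0 = 0"
  by (simp add: p_egf_def)

lemma p_egf_nth_Suc: "p_egf $ Suc n = (2/3) ^ n * poly (p_poly (int n)) (1/4) / fact (Suc n)"
proof -
  have "p_egf $ Suc n = (\<Sum>k\<le>Suc n. of_nat (Suc n choose k) *
      (case k of 0 \<Rightarrow> 0 | Suc i \<Rightarrow> alpha i) * alpha (Suc n - k)) / fact (Suc n)"
    by (simp add: p_egf_def fps_integral_egf egf_mult del: fact_Suc)
  also have "(\<Sum>k\<le>Suc n. of_nat (Suc n choose k) *
      (case k of 0 \<Rightarrow> 0 | Suc i \<Rightarrow> alpha i) * alpha (Suc n - k)) =
      (\<Sum>i\<le>n. of_nat (Suc n choose Suc i) * (alpha i * alpha (n - i)))"
    by (subst sum.atMost_Suc_shift) (simp add: mult.assoc del: binomial_Suc_Suc)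
  finally show ?thesis
    by (simp only: scaled_p_poly_quarter_eq_convolution)
qed

lemma p_egf_ODE: "(4 - fps_exp 1) * fps_deriv p_egf = 3 * fps_exp 1 + 2 * p_egf"
proof -
  have "(4 - fps_exp 1) * fps_deriv p_egf =
      (4 - fps_exp 1) * alpha_egf ^ 2 + fps_integral alpha_egf 0 * ((4 - fps_exp 1) * fps_deriv alpha_egf)"
    by (simp add: p_egf_def fps_deriv_fps_integral power2_eq_square algebra_simps)
  also have "\<dots> = 3 * fps_exp 1 + 2 * p_egf"
    unfolding alpha_egf_square alpha_egf_ODE p_egf_def by (simp add: algebra_simps)
  finally show ?thesis .
qed

section \<open>Generating functions of poly-Bernoulli numbers\<close>

definition one_minus_exp_neg :: "rat fps" where
  "one_minus_exp_neg = 1 - fps_exp (-1)"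

lemma one_minus_exp_neg_nth_0: "one_minus_exp_neg $ 0 = 0"
  by (simp add: one_minus_exp_neg_def)

lemma one_minus_exp_neg_nth_1: "one_minus_exp_neg $ 1 = 1"
  by (simp add: one_minus_exp_neg_def)

lemma one_minus_exp_neg_nonzero: "one_minus_exp_neg \<noteq> 0"
  using one_minus_exp_neg_nth_1 by auto

lemma subdegree_one_minus_exp_neg: "subdegree one_minus_exp_neg = 1"
  by (rule subdegreeI) (use one_minus_exp_neg_nth_0 one_minus_exp_neg_nth_1 in auto)

lemma fps_deriv_one_minus_exp_neg: "fps_deriv one_minus_exp_neg = fps_exp (-1)"
  by (simp add: one_minus_exp_neg_def fps_const_neg [symmetric])

lemma fps_exp_1_mult_exp_neg: "fps_exp 1 * fps_exp (-1) = (1 :: rat fps)"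
  by (simp flip: fps_exp_add_mult)

lemma Li_fps_neg_nth: "Li_fps (- int b) $ m = (if m = 0 then 0 else of_nat m ^ b)"
  by (simp add: Li_fps_def power_int_minus divide_inverse)

lemma Li_fps_neg_Suc: "Li_fps (- int (Suc b)) = fps_X * fps_deriv (Li_fps (- int b))"
  by (rule fps_ext) (auto simp: Li_fps_neg_nth simp del: of_nat_Suc)

lemma Li_fps_0: "(1 - fps_X) * Li_fps 0 = fps_X"
proof (rule fps_ext)
  fix n
  have "(1 - fps_X) * Li_fps 0 = Li_fps 0 - fps_X * Li_fps 0"
    by (simp add: algebra_simps)
  then show "((1 - fps_X) * Li_fps 0) $ n = fps_X $ n"
    by (cases n) (auto simp: Li_fps_def)
qed

lemma Li_fps_neg_compose:
  "Li_fps (- int b) oo one_minus_exp_neg = polyB_gf (- int b) * one_minus_exp_neg"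
proof (cases "Li_fps (- int b) oo one_minus_exp_neg = 0")
  case True
  then show ?thesis
    by (simp add: polyB_gf_def one_minus_exp_neg_def)
next
  case False
  moreover have "(Li_fps (- int b) oo one_minus_exp_neg) $ 0 = 0"
    by (simp add: Li_fps_neg_nth)
  ultimately have "subdegree (Li_fps (- int b) oo one_minus_exp_neg) \<noteq> 0"
    using subdegree_eq_0_iff by blast
  then have "subdegree one_minus_exp_neg \<le> subdegree (Li_fps (- int b) oo one_minus_exp_neg)"
    by (simp add: subdegree_one_minus_exp_neg)
  then show ?thesis
    using fps_times_divide_eq [OF one_minus_exp_neg_nonzero]
    by (simp add: polyB_gf_def one_minus_exp_neg_def)
qed

lemma polyB_gf_neg_Suc:
  "polyB_gf (- int (Suc b)) =
     polyB_gf (- int b) + (fps_exp 1 - 1) * fps_deriv (polyB_gf (- int b))"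
proof -
  let ?u = one_minus_exp_neg and ?G = "polyB_gf (- int b)"
  and ?L' = "fps_deriv (Li_fps (- int b)) oo one_minus_exp_neg"
  have "polyB_gf (- int (Suc b)) * ?u = Li_fps (- int (Suc b)) oo ?u"
    by (rule Li_fps_neg_compose [symmetric])
  also have "\<dots> = ?u * ?L'"
    unfolding Li_fps_neg_Suc using one_minus_exp_neg_nth_0 by (simp add: fps_compose_mult_distrib)
  also have "?L' = fps_exp 1 * fps_deriv (?G * ?u)"
    using one_minus_exp_neg_nth_0 fps_exp_1_mult_exp_neg
    by (simp add: Li_fps_neg_compose [symmetric] fps_compose_deriv fps_deriv_one_minus_exp_neg
        mult.assoc [symmetric])
  also have "?u * (fps_exp 1 * fps_deriv (?G * ?u)) =
      (?G + (fps_exp 1 - 1) * fps_deriv ?G) * ?u"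
    using fps_exp_1_mult_exp_neg
    unfolding fps_deriv_mult fps_deriv_one_minus_exp_neg unfolding one_minus_exp_neg_def
    by algebra
  finally show ?thesis
    using one_minus_exp_neg_nonzero by simp
qed

lemma polyB_gf_0: "polyB_gf 0 = fps_exp 1"
proof -
  have "(1 - one_minus_exp_neg) * (Li_fps 0 oo one_minus_exp_neg) = one_minus_exp_neg"
    using arg_cong [OF Li_fps_0, of "\<lambda>f. f oo one_minus_exp_neg"] one_minus_exp_neg_nth_0
    by (simp add: fps_compose_mult_distrib fps_compose_sub_distrib)
  then have "(fps_exp (-1) * polyB_gf 0) * one_minus_exp_neg = 1 * one_minus_exp_neg"
    using Li_fps_neg_compose [of 0] by (simp add: one_minus_exp_neg_def mult.assoc)
  then have "fps_exp (-1) * polyB_gf 0 = 1"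
    using one_minus_exp_neg_nonzero by (simp only: mult_cancel_right) simp
  then show ?thesis
    by (metis fps_exp_1_mult_exp_neg mult.assoc mult.commute mult_1)
qed

lemma polyB_gf_neg_nth_0: "polyB_gf (- int b) $ 0 = 1"
  by (induction b) (simp_all add: polyB_gf_0 polyB_gf_neg_Suc del: of_nat_Suc)

section \<open>Series in two variables\<close>

text \<open>
  A series in x and y is a series in y whose coefficients are series in x, so \<^const>\<open>fps_deriv\<close>
  is the derivative in y.
\<close>

definition deriv_x :: "'a::comm_ring_1 fps fps \<Rightarrow> 'a fps fps" where
  "deriv_x P = Abs_fps (\<lambda>b. fps_deriv (P $ b))"

lemma deriv_x_nth [simp]: "deriv_x P $ b = fps_deriv (P $ b)"
  by (simp add: deriv_x_def)

lemma deriv_x_add: "deriv_x (P + Q) = deriv_x P + deriv_x Q"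
  by (rule fps_ext) simp

lemma deriv_x_diff: "deriv_x (P - Q) = deriv_x P - deriv_x Q"
  by (rule fps_ext) simp

lemma deriv_x_mult: "deriv_x (P * Q) = deriv_x P * Q + P * deriv_x Q"
  by (rule fps_ext) (simp add: fps_mult_nth fps_deriv_sum sum.distrib)

lemma deriv_x_const: "deriv_x (fps_const c) = fps_const (fps_deriv c)"
  by (rule fps_ext) simp

abbreviation exp_x :: "'a::field_char_0 fps fps" where
  "exp_x \<equiv> fps_const (fps_exp 1)"

definition exp_y :: "'a::field_char_0 fps fps" where
  "exp_y = Abs_fps (\<lambda>b. fps_const (1 / fact b))"

lemma exp_y_nth_0 [simp]: "exp_y $ 0 = 1"
  by (simp add: exp_y_def)

lemma fps_deriv_exp_y [simp]: "fps_deriv exp_y = exp_y"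
  by (rule fps_ext) (simp add: exp_y_def fps_of_nat [symmetric] del: of_nat_Suc)

lemma deriv_x_exp_y [simp]: "deriv_x exp_y = 0"
  by (rule fps_ext) (simp add: exp_y_def)

definition at_x0 :: "'a::comm_ring_1 fps fps \<Rightarrow> 'a fps" where
  "at_x0 P = Abs_fps (\<lambda>b. P $ b $ 0)"

text \<open>
  If P = sum p(a,b) x^a y^b / (a! b!), the coefficient of t^(n+1) / (n+1)! in
  antidiag_integral P is the antidiagonal sum of the p(a,b) with a + b = n.
\<close>

definition antidiag_integral :: "'a::field_char_0 fps fps \<Rightarrow> 'a fps" where
  "antidiag_integral P = Abs_fps (\<lambda>m. case m of 0 \<Rightarrow> 0
     | Suc n \<Rightarrow> (\<Sum>a\<le>n. fact a * fact (n - a) * P $ (n - a) $ a) / fact (Suc n))"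

lemma antidiag_integral_nth_0 [simp]: "antidiag_integral P $ 0 = 0"
  by (simp add: antidiag_integral_def)

lemma antidiag_integral_nth_Suc:
  "antidiag_integral P $ Suc n = (\<Sum>a\<le>n. fact a * fact (n - a) * P $ (n - a) $ a) / fact (Suc n)"
  by (simp add: antidiag_integral_def)

lemma fps_deriv_antidiag_integral_nth:
  "fps_deriv (antidiag_integral P) $ n = (\<Sum>a\<le>n. fact a * fact (n - a) * P $ (n - a) $ a) / fact n"
  by (simp add: antidiag_integral_nth_Suc del: of_nat_Suc fact_Suc)
     (simp add: field_simps del: of_nat_Suc)

lemma antidiag_integral_add:
  "antidiag_integral (P + Q) = antidiag_integral P + antidiag_integral Q"
  by (rule fps_ext) (simp add: antidiag_integral_def sum.distrib add_divide_distrib algebra_simps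
      split: nat.split)

lemma antidiag_integral_diff:
  "antidiag_integral (P - Q) = antidiag_integral P - antidiag_integral Q"
  by (rule fps_ext) (simp add: antidiag_integral_def sum_subtractf diff_divide_distrib algebra_simps
      split: nat.split)

lemma antidiag_integral_const_mult:
  "antidiag_integral (fps_const (fps_const c) * P) = fps_const c * antidiag_integral P"
  by (rule fps_ext) (simp add: antidiag_integral_def sum_distrib_left algebra_simps split: nat.split)

lemma fps_deriv_antidiag_integral_y:
  "fps_deriv (antidiag_integral P) = P $ 0 + antidiag_integral (fps_deriv P)"
proof (rule fps_ext)
  fix n
  show "fps_deriv (antidiag_integral P) $ n = (P $ 0 + antidiag_integral (fps_deriv P)) $ n"
  proof (cases n)
    case 0
    then show ?thesis
      by (simp add: antidiag_integral_nth_Suc)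
  next
    case (Suc m)
    have "(\<Sum>a\<le>m. fact a * fact (Suc m - a) * P $ (Suc m - a) $ a) =
        (\<Sum>a\<le>m. fact a * fact (m - a) * fps_deriv P $ (m - a) $ a)"
    proof (intro sum.cong refl)
      fix a
      assume "a \<in> {..m}"
      then have "Suc m - a = Suc (m - a)"
        by (simp add: Suc_diff_le)
      then show "fact a * fact (Suc m - a) * P $ (Suc m - a) $ a =
          fact a * fact (m - a) * fps_deriv P $ (m - a) $ a"
        by (simp add: fps_of_nat [symmetric] del: of_nat_Suc)
    qed
    then have "(\<Sum>a\<le>Suc m. fact a * fact (Suc m - a) * P $ (Suc m - a) $ a) =
        (\<Sum>a\<le>m. fact a * fact (m - a) * fps_deriv P $ (m - a) $ a) + fact (Suc m) * P $ 0 $ Suc m"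
      by simp
    then show ?thesis
      unfolding fps_deriv_antidiag_integral_nth Suc fps_add_nth antidiag_integral_nth_Suc
      by (simp add: add_divide_distrib del: fact_Suc)
  qed
qed

lemma fps_deriv_antidiag_integral_x:
  "fps_deriv (antidiag_integral P) = at_x0 P + antidiag_integral (deriv_x P)"
proof (rule fps_ext)
  fix n
  show "fps_deriv (antidiag_integral P) $ n = (at_x0 P + antidiag_integral (deriv_x P)) $ n"
  proof (cases n)
    case 0
    then show ?thesis
      by (simp add: antidiag_integral_nth_Suc at_x0_def)
  next
    case (Suc m)
    have "(\<Sum>a\<le>Suc m. fact a * fact (Suc m - a) * P $ (Suc m - a) $ a) =
        fact (Suc m) * P $ Suc m $ 0 + (\<Sum>a\<le>m. fact (Suc a) * fact (m - a) * P $ (m - a) $ Suc a)"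
      by (subst sum.atMost_Suc_shift) simp
    also have "(\<Sum>a\<le>m. fact (Suc a) * fact (m - a) * P $ (m - a) $ Suc a) =
        (\<Sum>a\<le>m. fact a * fact (m - a) * deriv_x P $ (m - a) $ a)"
      by (intro sum.cong refl) (simp add: algebra_simps del: of_nat_Suc)
    finally show ?thesis
      unfolding fps_deriv_antidiag_integral_nth Suc fps_add_nth antidiag_integral_nth_Suc
      by (simp add: add_divide_distrib at_x0_def del: fact_Suc)
  qed
qed

lemma antidiag_integral_exp_mult:
  "antidiag_integral (exp_x * exp_y * P) = fps_exp 1 * antidiag_integral P"
proof -
  have "\<forall>P :: 'a fps fps. antidiag_integral (exp_x * exp_y * P) $ n = (fps_exp 1 * antidiag_integral P) $ n" for n
  proof (induction n)
    case 0
    then show ?case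
      by simp
  next
    case (Suc n)
    show ?case
    proof
      fix P :: "'a fps fps"
      have "fps_deriv (exp_x * exp_y * P) = exp_x * exp_y * P + exp_x * exp_y * fps_deriv P"
        by (simp add: algebra_simps)
      then have "fps_deriv (antidiag_integral (exp_x * exp_y * P)) $ n =
          (fps_exp 1 * P $ 0) $ n + antidiag_integral (exp_x * exp_y * P) $ n +
          antidiag_integral (exp_x * exp_y * fps_deriv P) $ n"
        by (simp add: fps_deriv_antidiag_integral_y antidiag_integral_add)
      also have "\<dots> = (fps_exp 1 * P $ 0) $ n + (fps_exp 1 * antidiag_integral P) $ n +
          (fps_exp 1 * antidiag_integral (fps_deriv P)) $ n"
        by (simp only: Suc.IH)
      also have "\<dots> = fps_deriv (fps_exp 1 * antidiag_integral P) $ n"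
        by (simp add: fps_deriv_antidiag_integral_y algebra_simps)
      finally show "antidiag_integral (exp_x * exp_y * P) $ Suc n =
          (fps_exp 1 * antidiag_integral P) $ Suc n"
        by (simp del: of_nat_Suc fps_deriv_mult)
    qed
  qed
  then show ?thesis
    by (intro fps_ext) simp
qed

section \<open>The right-hand side\<close>

definition polyB_double_egf :: "rat fps fps" where
  "polyB_double_egf = Abs_fps (\<lambda>b. fps_const (1 / fact b) * polyB_gf (- int b))"

lemma polyB_double_egf_nth_0: "polyB_double_egf $ 0 = fps_exp 1"
  by (simp add: polyB_double_egf_def polyB_gf_0)

lemma fps_deriv_polyB_double_egf:
  "fps_deriv polyB_double_egf = polyB_double_egf + fps_const (fps_exp 1 - 1) * deriv_x polyB_double_egf"
proof (rule fps_ext)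
  fix b
  have "fps_deriv polyB_double_egf $ b = fps_const (of_nat (Suc b) / fact (Suc b)) * polyB_gf (- int (Suc b))"
    by (simp add: polyB_double_egf_def fps_of_nat [symmetric] del: of_nat_Suc fact_Suc)
  also have "\<dots> = fps_const (1 / fact b) * polyB_gf (- int (Suc b))"
    by simp
  also have "\<dots> = (polyB_double_egf + fps_const (fps_exp 1 - 1) * deriv_x polyB_double_egf) $ b"
    by (simp add: polyB_double_egf_def polyB_gf_neg_Suc algebra_simps del: of_nat_Suc)
  finally show "fps_deriv polyB_double_egf $ b = (polyB_double_egf + fps_const (fps_exp 1 - 1) * deriv_x polyB_double_egf) $ b" .
qed

lemma polyB_double_egf_closed_form: "(exp_x + exp_y - exp_x * exp_y) * polyB_double_egf = exp_x * exp_y"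
proof -
  define H where "H = (exp_x + exp_y - exp_x * exp_y) * polyB_double_egf - exp_x * exp_y"
  have "fps_deriv H = fps_const (fps_exp 1 - 1) * deriv_x H + fps_const (2 - fps_exp 1) * H"
  proof -
    let ?F = polyB_double_egf
    have "fps_deriv H = (exp_y - exp_x * exp_y) * ?F +
        (exp_x + exp_y - exp_x * exp_y) * fps_deriv ?F - exp_x * exp_y"
      unfolding H_def by (simp add: algebra_simps)
    moreover have "deriv_x H = (exp_x - exp_x * exp_y) * ?F +
        (exp_x + exp_y - exp_x * exp_y) * deriv_x ?F - exp_x * exp_y"
      unfolding H_def by (simp add: deriv_x_mult deriv_x_add deriv_x_diff deriv_x_const algebra_simps)
    moreover have "fps_const (fps_exp 1 - 1) = exp_x - (1 :: rat fps fps)"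
      by simp
    moreover have "fps_const (2 - fps_exp 1) = 2 - (exp_x :: rat fps fps)"
      by (simp add: numeral_fps_const)
    ultimately show ?thesis
      using fps_deriv_polyB_double_egf unfolding H_def by algebra
  qed
  moreover have "H $ 0 = 0"
    by (simp add: H_def polyB_double_egf_nth_0)
  ultimately have "H = 0"
    by (intro fps_eq_0_by_causal_deriv) (simp_all add: fps_mult_nth)
  then show ?thesis
    by (simp add: H_def)
qed

lemma polyB_double_egf_PDE:
  "(2 + exp_x - exp_x * exp_y) * fps_deriv polyB_double_egf =
     (2 + exp_x) * polyB_double_egf + (exp_x - 2) * deriv_x polyB_double_egf"
proof -
  let ?F = polyB_double_egf and ?N = "exp_x + exp_y - exp_x * exp_y :: rat fps fps"
  have "fps_deriv (?N * ?F) = fps_deriv (exp_x * exp_y)"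
    by (simp only: polyB_double_egf_closed_form)
  then have dy: "?N * fps_deriv ?F = ?N * ?F - (exp_y - exp_x * exp_y) * ?F"
    using polyB_double_egf_closed_form by (simp add: algebra_simps)
  have "deriv_x (?N * ?F) = deriv_x (exp_x * exp_y)"
    by (simp only: polyB_double_egf_closed_form)
  then have dx: "?N * deriv_x ?F = ?N * ?F - (exp_x - exp_x * exp_y) * ?F"
    using polyB_double_egf_closed_form
    by (simp add: deriv_x_mult deriv_x_add deriv_x_diff deriv_x_const algebra_simps)
  have "?N * ((2 + exp_x - exp_x * exp_y) * fps_deriv ?F - ((2 + exp_x) * ?F + (exp_x - 2) * deriv_x ?F))
      = (2 + exp_x - exp_x * exp_y) * (?N * fps_deriv ?F) - (2 + exp_x) * ?N * ?F - (exp_x - 2) * (?N * deriv_x ?F)"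
    by (simp add: algebra_simps)
  also have "\<dots> = 0"
    unfolding dx dy by algebra
  finally have "?N * ((2 + exp_x - exp_x * exp_y) * fps_deriv ?F -
      ((2 + exp_x) * ?F + (exp_x - 2) * deriv_x ?F)) = 0" .
  moreover have "?N \<noteq> 0"
  proof
    assume "?N = 0"
    then have "?N $ 0 = 0"
      by (simp only: fps_zero_nth)
    then show False
      by simp
  qed
  ultimately show ?thesis
    by simp
qed

definition polyB_antidiag_egf :: "rat fps" where
  "polyB_antidiag_egf = antidiag_integral polyB_double_egf"

lemma polyB_antidiag_egf_nth_0: "polyB_antidiag_egf $ 0 = 0"
  by (simp add: polyB_antidiag_egf_def)

lemma polyB_antidiag_egf_nth_Suc:
  "polyB_antidiag_egf $ Suc n = (\<Sum>k=0..n. polyB (n - k) (- int k)) / fact (Suc n)"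
proof -
  have "polyB_antidiag_egf $ Suc n = (\<Sum>a\<le>n. polyB a (- int (n - a))) / fact (Suc n)"
    unfolding polyB_antidiag_egf_def antidiag_integral_nth_Suc
    by (intro arg_cong2 [where f = "(/)"] sum.cong refl) (simp add: polyB_double_egf_def polyB_def)
  also have "(\<Sum>a\<le>n. polyB a (- int (n - a))) = (\<Sum>k=0..n. polyB (n - k) (- int k))"
    by (subst sum.atLeastAtMost_rev) (simp add: atLeast0AtMost)
  finally show ?thesis .
qed

lemma polyB_antidiag_egf_ODE:
  "(4 - fps_exp 1) * fps_deriv polyB_antidiag_egf = 3 * fps_exp 1 + 2 * polyB_antidiag_egf"
proof -
  let ?F = polyB_double_egf and ?R = polyB_antidiag_egf and ?E = "fps_exp 1 :: rat fps"
  \<comment> \<open>By \<open>polyB_double_egf_PDE\<close> the combination of derivatives of F below is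
    deriv_x Psi - fps_deriv Psi, which \<^const>\<open>antidiag_integral\<close> maps to boundary terms.\<close>
  define Psi where "Psi = (exp_x - 2) * ?F"
  have "4 * fps_deriv ?F - exp_x * exp_y * fps_deriv ?F - 2 * ?F = deriv_x Psi - fps_deriv Psi"
  proof -
    have "deriv_x (exp_x - 2 :: rat fps fps) = exp_x"
      by (rule fps_ext) (simp add: numeral_fps_const)
    then have dx: "deriv_x Psi = exp_x * ?F + (exp_x - 2) * deriv_x ?F"
      by (simp add: Psi_def deriv_x_mult)
    have dy: "fps_deriv Psi = (exp_x - 2) * fps_deriv ?F"
      by (simp add: Psi_def)
    show ?thesis
      unfolding dx dy using polyB_double_egf_PDE by algebra
  qed
  moreover have "antidiag_integral (4 * fps_deriv ?F - exp_x * exp_y * fps_deriv ?F - 2 * ?F) =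
      4 * antidiag_integral (fps_deriv ?F) - ?E * antidiag_integral (fps_deriv ?F) - 2 * ?R"
    by (simp add: antidiag_integral_diff antidiag_integral_const_mult antidiag_integral_exp_mult
        polyB_antidiag_egf_def numeral_fps_const)
  moreover have "antidiag_integral (deriv_x Psi - fps_deriv Psi) = Psi $ 0 - at_x0 Psi"
    using fps_deriv_antidiag_integral_x [of Psi] fps_deriv_antidiag_integral_y [of Psi]
    by (simp add: antidiag_integral_diff algebra_simps)
  moreover have "antidiag_integral (fps_deriv ?F) = fps_deriv ?R - ?E"
    using fps_deriv_antidiag_integral_y [of ?F] by (simp add: polyB_antidiag_egf_def polyB_double_egf_nth_0)
  moreover have "Psi $ 0 = (?E - 2) * ?E"
    by (simp add: Psi_def polyB_double_egf_nth_0 numeral_fps_const)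
  moreover have "at_x0 Psi = - ?E"
    by (rule fps_ext) (simp add: at_x0_def Psi_def polyB_double_egf_def polyB_gf_neg_nth_0 numeral_fps_const)
  ultimately have "4 * (fps_deriv ?R - ?E) - ?E * (fps_deriv ?R - ?E) - 2 * ?R = (?E - 2) * ?E + ?E"
    by simp
  then show ?thesis
    by algebra
qed

theorem theorem3p5:
  fixes n :: nat
  shows "(2/3 :: rat) ^ n * poly (p_poly (int n)) (1/4) = (\<Sum>k=0..n. polyB (n - k) (- int k))"
proof -
  have "p_egf - polyB_antidiag_egf = 0"
  proof (rule fps_linear_ODE_eq_0)
    show "(4 - fps_exp 1) * fps_deriv (p_egf - polyB_antidiag_egf) = 2 * (p_egf - polyB_antidiag_egf)"
      using p_egf_ODE polyB_antidiag_egf_ODE by (simp add: algebra_simps)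
  qed (simp_all add: p_egf_nth_0 polyB_antidiag_egf_nth_0)
  then have "p_egf $ Suc n = polyB_antidiag_egf $ Suc n"
    by simp
  then show ?thesis
    by (simp add: p_egf_nth_Suc polyB_antidiag_egf_nth_Suc del: fact_Suc)
qed

end
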